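(* Let $X \subseteq 2^\omega$ be nice. Then for every Borel function $x \mapsto f^x$ from $2^\omega$ to $\omega^\omega$ there exists a strictly increasing sequence $\{n_k : k \in \omega\}$ of natural numbers such that for every $x \in X$ there are infinitely many $k$ with $f^x(n_k) < n_{k+1}$.
   Context: A set $X \subseteq 2^\omega$ is nice if for every Borel function $x \mapsto f^x$ from $2^\omega$ to $\omega^\omega$ there exists $g \in \omega^\omega$ such that for every $x \in X$ there are infinitely many $n$ with $f^x(n) = g(n)$. *)

theory Defs
  imports "HOL-Analysis.Analysis"
begin

text \<open>Cantor space 2^omega is nat => bool, Baire space omega^omega is nat => nat,
 both with the product topology (Function_Topology) of the discrete (order) topologies
 on bool and nat; Borel functions are maps measurable w.r.t. the Borel sigma-algebras.\<close>

definition nice :: "(nat \<Rightarrow> bool) set \<Rightarrow> bool" where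
  "nice X \<longleftrightarrow>
     (\<forall>f \<in> measurable (borel :: (nat \<Rightarrow> bool) measure) (borel :: (nat \<Rightarrow> nat) measure).
        \<exists>g :: nat \<Rightarrow> nat. \<forall>x \<in> X. infinite {n. f x n = g n})"

end

theory Submission
  imports Defs
begin

(* For x in X let h_x(m) = f^x(0) + ... + f^x(m) + m + 1, so that f^x(i) < h_x(m) for i <= m.
   The map x |-> h_x o h_x is Borel, so niceness yields g with h_x(h_x(m)) = g(m) for
   infinitely many m. Put n_0 = 0 and n_(k+1) = g(0) + ... + g(n_k) + n_k + 1. Given such an m,
   pick k with n_k <= m < n_(k+1). Either f^x(n_k) < n_(k+1), or n_(k+1) <= f^x(n_k) < h_x(m),
   and then f^x(n_(k+1)) < h_x(h_x(m)) = g(m) < n_(k+2). *)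

definition majorant :: "(nat \<Rightarrow> nat) \<Rightarrow> nat \<Rightarrow> nat" where
  "majorant \<phi> m = (\<Sum>i\<le>m. \<phi> i) + m + 1"

lemma le_imp_less_majorant: "i \<le> m \<Longrightarrow> \<phi> i < majorant \<phi> m"
  unfolding majorant_def using member_le_sum[of i "{..m}" \<phi>] by simp

lemma less_majorant_self: "m < majorant \<phi> m"
  by (simp add: majorant_def)

lemma strict_mono_iterated_majorant: "strict_mono (\<lambda>k. (majorant g ^^ k) 0)"
  by (rule strict_monoI_Suc) (simp add: less_majorant_self)

lemma strict_mono_bracket:
  fixes n :: "nat \<Rightarrow> nat"
  assumes "strict_mono n" and "n 0 \<le> m"
  obtains k where "n k \<le> m" and "m < n (Suc k)"
proof -
  have "\<exists>k. n k \<le> m \<and> m < n (Suc k)" using assms(2)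
  proof (induction m rule: dec_induct)
    case base
    then show ?case using assms(1) by (auto intro: exI[of _ 0] strict_monoD)
  next
    case (step m)
    then obtain k where k: "n k \<le> m" "m < n (Suc k)" by blast
    show ?case
    proof (cases "Suc m < n (Suc k)")
      case True
      then show ?thesis using k by (auto intro: exI[of _ k])
    next
      case False
      then have "n (Suc k) = Suc m" using k by simp
      moreover have "n (Suc k) < n (Suc (Suc k))" using assms(1) by (simp add: strict_mono_less)
      ultimately show ?thesis by (metis order_refl)
    qed
  qed
  then show ?thesis using that by blast
qed

lemma infinitely_often_below_iterated_majorant:
  fixes \<phi> g :: "nat \<Rightarrow> nat"
  assumes "infinite {m. majorant \<phi> (majorant \<phi> m) \<le> g m}"
  shows "infinite {k. \<phi> ((majorant g ^^ k) 0) < (majorant g ^^ Suc k) 0}"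
  unfolding infinite_nat_iff_unbounded_le
proof
  fix K
  define n where "n k = (majorant g ^^ k) 0" for k
  have n_mono: "strict_mono n"
    unfolding n_def by (rule strict_mono_iterated_majorant)
  have n_Suc: "n (Suc k) = majorant g (n k)" for k
    by (simp add: n_def)
  obtain m where "n K \<le> m" and m: "majorant \<phi> (majorant \<phi> m) \<le> g m"
    using assms unfolding infinite_nat_iff_unbounded_le by blast
  obtain k where k: "n k \<le> m" "m < n (Suc k)"
    using strict_mono_bracket[OF n_mono, of m] by (auto simp: n_def)
  have "n K < n (Suc k)"
    using \<open>n K \<le> m\<close> k(2) by simp
  then have "K \<le> k"
    using n_mono by (simp add: strict_mono_less)
  show "\<exists>k'\<ge>K. k' \<in> {k. \<phi> (n k) < n (Suc k)}"
  proof (cases "\<phi> (n k) < n (Suc k)")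
    case True
    then show ?thesis using \<open>K \<le> k\<close> by auto
  next
    case False
    have "n (Suc k) < majorant \<phi> m"
      using False le_imp_less_majorant[OF k(1), of \<phi>] by simp
    then have "\<phi> (n (Suc k)) < majorant \<phi> (majorant \<phi> m)"
      using le_imp_less_majorant[of "n (Suc k)" "majorant \<phi> m" \<phi>] by simp
    also have "\<dots> \<le> g m" by (rule m)
    also have "\<dots> < n (Suc (Suc k))"
      using le_imp_less_majorant[of m "n (Suc k)" g] k(2) n_Suc by simp
    finally show ?thesis using \<open>K \<le> k\<close> by (intro exI[of _ "Suc k"]) auto
  qed
qed

lemma measurable_borel_eq_count_space:
  "measurable M (borel :: 'b::{countable,t2_space} measure) = measurable M (count_space UNIV)"
  by (rule measurable_cong_sets[OF refl sets_borel_eq_count_space])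

lemma borel_measurable_comp_fun:
  fixes f :: "'a \<Rightarrow> 'i::{countable,t2_space} \<Rightarrow> 'b::second_countable_topology"
    and g :: "'a \<Rightarrow> 'j::countable \<Rightarrow> 'i"
  assumes "f \<in> borel_measurable M" and "g \<in> borel_measurable M"
  shows "(\<lambda>x. f x \<circ> g x) \<in> borel_measurable M"
proof (rule measurable_coordinatewise_then_product)
  fix j
  have "(\<lambda>x. g x j) \<in> measurable M (count_space UNIV)"
    using measurable_product_then_coordinatewise[OF assms(2)]
    by (simp add: measurable_borel_eq_count_space)
  then show "(\<lambda>x. (f x \<circ> g x) j) \<in> borel_measurable M"
    unfolding comp_def
    by (rule measurable_compose_countable'[OF measurable_product_then_coordinatewise[OF assms(1)]]) simp
qed

lemma borel_measurable_majorant: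
  fixes f :: "'a \<Rightarrow> nat \<Rightarrow> nat"
  assumes "f \<in> borel_measurable M"
  shows "(\<lambda>x. majorant (f x)) \<in> borel_measurable M"
proof (rule measurable_coordinatewise_then_product)
  fix m
  have [measurable]: "(\<lambda>x. f x i) \<in> borel_measurable M" for i
    using assms by (rule measurable_product_then_coordinatewise)
  show "(\<lambda>x. majorant (f x) m) \<in> borel_measurable M"
    unfolding majorant_def by measurable
qed

theorem lemma2p6:
  fixes X :: "(nat \<Rightarrow> bool) set"
    and f :: "(nat \<Rightarrow> bool) \<Rightarrow> (nat \<Rightarrow> nat)"
  assumes "nice X"
    and "f \<in> measurable (borel :: (nat \<Rightarrow> bool) measure) (borel :: (nat \<Rightarrow> nat) measure)"
  shows "\<exists>n :: nat \<Rightarrow> nat. strict_mono n \<and>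
           (\<forall>x \<in> X. infinite {k. f x (n k) < n (Suc k)})"
proof -
  have "(\<lambda>x. majorant (f x) \<circ> majorant (f x)) \<in> borel_measurable borel"
    using borel_measurable_majorant[OF assms(2)] by (intro borel_measurable_comp_fun)
  then obtain g where g: "\<forall>x \<in> X. infinite {m. majorant (f x) (majorant (f x) m) = g m}"
    using assms(1) unfolding nice_def by auto
  have "infinite {k. f x ((majorant g ^^ k) 0) < (majorant g ^^ Suc k) 0}" if "x \<in> X" for x
  proof (rule infinitely_often_below_iterated_majorant)
    have "{m. majorant (f x) (majorant (f x) m) = g m}
        \<subseteq> {m. majorant (f x) (majorant (f x) m) \<le> g m}"
      by auto
    then show "infinite {m. majorant (f x) (majorant (f x) m) \<le> g m}"
      using g that infinite_super by blast
  qed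
  then show ?thesis
    using strict_mono_iterated_majorant by blast
qed

end
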